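(* Let $D$ be a finite digraph, let $k\ge 2$, and let $D_1,\dots,D_t$ be the strong components of $D$. Then $D$ is $k$-AW if and only if each $D_i$ is $k$-AW.
   Context: A digraph is strongly connected if for any two vertices $v,w$ there is a directed walk from $v$ to $w$ and one from $w$ to $v$. A strong component of $D$ is a maximal strongly connected subdigraph (an induced subdigraph); the vertex sets of the strong components partition $V(D)$. The $k$-lights out game on a digraph $D$ ($k\ge 2$): start with a labeling $\lambda:V(D)\to\mathbb{Z}_k$. Toggling a vertex $v$ increases by $1$ (mod $k$) the label of $v$ and of every vertex $w$ with $vw\in A(D)$. The game is won when every vertex has label $0$. A labeling is $k$-winnable if some finite sequence of toggles wins the game starting from it; $D$ is $k$-Always Winnable ($k$-AW) if every labeling $V(D)\to\mathbb{Z}_k$ is $k$-winnable. *)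

theory Defs
  imports Main
begin

text \<open>A finite digraph is given by a vertex set V and an arc relation A \<subseteq> V \<times> V
  (an arc vw is the pair (v,w)).\<close>

definition digraph :: "'a set \<Rightarrow> ('a \<times> 'a) set \<Rightarrow> bool" where
  "digraph V A \<longleftrightarrow> A \<subseteq> V \<times> V"

definition strongly_connected :: "'a set \<Rightarrow> ('a \<times> 'a) set \<Rightarrow> bool" where
  "strongly_connected V A \<longleftrightarrow>
     (\<forall>v\<in>V. \<forall>w\<in>V. (v, w) \<in> (A \<inter> (V \<times> V))\<^sup>* \<and> (w, v) \<in> (A \<inter> (V \<times> V))\<^sup>*)"

definition strong_component :: "'a set \<Rightarrow> ('a \<times> 'a) set \<Rightarrow> 'a set \<Rightarrow> bool" where
  "strong_component V A C \<longleftrightarrow>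
     C \<subseteq> V \<and> strongly_connected C (A \<inter> (C \<times> C)) \<and>
     (\<forall>C'. C \<subseteq> C' \<and> C' \<subseteq> V \<and> strongly_connected C' (A \<inter> (C' \<times> C')) \<longrightarrow> C' = C)"

text \<open>Toggling v adds 1 (mod k) to the label of v and of every w with vw an arc.
  Labels in Z_k are represented by naturals below k.\<close>
definition toggle :: "('a \<times> 'a) set \<Rightarrow> nat \<Rightarrow> 'a \<Rightarrow> ('a \<Rightarrow> nat) \<Rightarrow> ('a \<Rightarrow> nat)" where
  "toggle A k v lab = (\<lambda>w. if w = v \<or> (v, w) \<in> A then (lab w + 1) mod k else lab w)"

definition winnable :: "nat \<Rightarrow> 'a set \<Rightarrow> ('a \<times> 'a) set \<Rightarrow> ('a \<Rightarrow> nat) \<Rightarrow> bool" where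
  "winnable k V A lab \<longleftrightarrow>
     (\<exists>vs. set vs \<subseteq> V \<and> (\<forall>w\<in>V. fold (toggle A k) vs lab w = 0))"

definition always_winnable :: "nat \<Rightarrow> 'a set \<Rightarrow> ('a \<times> 'a) set \<Rightarrow> bool" where
  "always_winnable k V A \<longleftrightarrow> (\<forall>lab. (\<forall>v\<in>V. lab v < k) \<longrightarrow> winnable k V A lab)"

end

theory Submission
  imports Defs "HOL-Library.FuncSet"
begin

text \<open>Toggles commute, so a sequence of toggles only matters through the number \<open>x v\<close> of
  times each vertex \<open>v\<close> is toggled, and it changes the labelling by \<open>N x\<close> modulo \<open>k\<close>, where
  \<open>N\<close> is the identity plus the transposed adjacency matrix. Hence \<open>D\<close> is \<open>k\<close>-AW iff \<open>N\<close>
  induces a surjection, equivalently (by finiteness) an injection, of \<open>\<int>\<^sub>k\<^sup>V\<close>.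
  If no arc enters a vertex set \<open>S\<close> from \<open>V - S\<close>, as for the set of ancestors of a vertex,
  then \<open>N\<close> is block triangular with diagonal blocks indexed by \<open>S\<close> and \<open>V - S\<close>: surjectivity
  of \<open>N\<close> restricts to \<open>S\<close>, injectivity restricts to \<open>V - S\<close>, and surjectivity on both blocks
  gives surjectivity of \<open>N\<close>. Splitting along ancestor sets by induction on \<open>V\<close> leaves only the
  strongly connected pieces, which are the strong components.\<close>

section \<open>Counting toggles\<close>

text \<open>\<open>toggle_sum A V x w\<close> is the entry at \<open>w\<close> of \<open>N x\<close>: the total amount added to the label
  of \<open>w\<close> when each \<open>v \<in> V\<close> is toggled \<open>x v\<close> times.\<close>

definition toggle_sum :: "('a \<times> 'a) set \<Rightarrow> 'a set \<Rightarrow> ('a \<Rightarrow> nat) \<Rightarrow> 'a \<Rightarrow> nat" where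
  "toggle_sum A V x w = (\<Sum>v\<in>V. if w = v \<or> (v, w) \<in> A then x v else 0)"

lemma toggle_sum_cong: "\<forall>v\<in>V. x v = x' v \<Longrightarrow> toggle_sum A V x w = toggle_sum A V x' w"
  unfolding toggle_sum_def by (rule sum.cong) auto

lemma fold_toggle:
  assumes "0 < k" "lab w < k"
  shows "fold (toggle A k) vs lab w = (lab w + length (filter (\<lambda>v. w = v \<or> (v, w) \<in> A) vs)) mod k"
  using assms(2)
proof (induction vs arbitrary: lab)
  case (Cons a vs)
  have "toggle A k a lab w < k"
    using Cons.prems assms(1) by (simp add: toggle_def)
  then show ?case
    using Cons.IH[of "toggle A k a lab"] by (auto simp: toggle_def mod_add_left_eq)
qed simp

lemma count_list_filter: "count_list (filter P xs) v = (if P v then count_list xs v else 0)"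
  by (induction xs) auto

lemma count_list_replicate: "count_list (replicate n a) v = (if a = v then n else 0)"
  by (induction n) auto

lemma fold_toggle_eq_toggle_sum:
  assumes "finite V" "set vs \<subseteq> V" "0 < k" "lab w < k"
  shows "fold (toggle A k) vs lab w = (lab w + toggle_sum A V (count_list vs) w) mod k"
proof -
  let ?P = "\<lambda>v. w = v \<or> (v, w) \<in> A"
  have "length (filter ?P vs) = sum (count_list (filter ?P vs)) V"
    using assms(1,2) by (metis sum_count_set filter_is_subset subset_trans)
  also have "\<dots> = toggle_sum A V (count_list vs) w"
    unfolding toggle_sum_def count_list_filter ..
  finally show ?thesis
    using fold_toggle[of k lab w A vs] assms(3,4) by simp
qed

lemma exists_list_with_counts:
  "finite V \<Longrightarrow> \<exists>vs. set vs \<subseteq> V \<and> (\<forall>v\<in>V. count_list vs v = x v)"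
proof (induction V rule: finite_induct)
  case (insert a F)
  then obtain vs where vs: "set vs \<subseteq> F" "\<forall>v\<in>F. count_list vs v = x v" by blast
  with insert.hyps(2) have "a \<notin> set vs" by blast
  with vs show ?case
    by (intro exI[of _ "vs @ replicate (x a) a"]) (auto simp: count_list_replicate)
qed simp

lemma winnable_iff_toggle_sum:
  assumes "finite V" "0 < k" "\<forall>w\<in>V. lab w < k"
  shows "winnable k V A lab \<longleftrightarrow> (\<exists>x. \<forall>w\<in>V. (lab w + toggle_sum A V x w) mod k = 0)"
proof
  assume "winnable k V A lab"
  then obtain vs where "set vs \<subseteq> V" "\<forall>w\<in>V. fold (toggle A k) vs lab w = 0"
    unfolding winnable_def by blast
  then show "\<exists>x. \<forall>w\<in>V. (lab w + toggle_sum A V x w) mod k = 0"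
    using fold_toggle_eq_toggle_sum assms by metis
next
  assume "\<exists>x. \<forall>w\<in>V. (lab w + toggle_sum A V x w) mod k = 0"
  then obtain x where x: "\<forall>w\<in>V. (lab w + toggle_sum A V x w) mod k = 0" by blast
  obtain vs where vs: "set vs \<subseteq> V" "\<forall>v\<in>V. count_list vs v = x v"
    using exists_list_with_counts[OF assms(1)] by blast
  have "\<forall>w\<in>V. fold (toggle A k) vs lab w = 0"
    using x fold_toggle_eq_toggle_sum[OF assms(1) vs(1) assms(2)] assms(3)
      toggle_sum_cong[OF vs(2)] by simp
  with vs(1) show "winnable k V A lab"
    unfolding winnable_def by blast
qed

section \<open>Self-maps of \<open>\<int>\<^sub>k\<^sup>V\<close>\<close>

text \<open>Surjectivity and injectivity of the self-map of \<open>\<int>\<^sub>k\<^sup>V\<close> induced by \<open>F\<close>; vectors are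
  represented by arbitrary functions into \<open>nat\<close>, compared modulo \<open>k\<close> on \<open>V\<close>.\<close>

definition surj_mod :: "nat \<Rightarrow> 'a set \<Rightarrow> (('a \<Rightarrow> nat) \<Rightarrow> 'a \<Rightarrow> nat) \<Rightarrow> bool" where
  "surj_mod k V F \<longleftrightarrow> (\<forall>y. \<exists>x. \<forall>w\<in>V. F x w mod k = y w mod k)"

definition inj_mod :: "nat \<Rightarrow> 'a set \<Rightarrow> (('a \<Rightarrow> nat) \<Rightarrow> 'a \<Rightarrow> nat) \<Rightarrow> bool" where
  "inj_mod k V F \<longleftrightarrow>
     (\<forall>x x'. (\<forall>w\<in>V. F x w mod k = F x' w mod k) \<longrightarrow> (\<forall>v\<in>V. x v mod k = x' v mod k))"

definition mod_rep :: "nat \<Rightarrow> 'a set \<Rightarrow> ('a \<Rightarrow> nat) \<Rightarrow> 'a \<Rightarrow> nat" where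
  "mod_rep k V x = restrict (\<lambda>v. x v mod k) V"

lemma mod_rep_eq_iff: "mod_rep k V x = mod_rep k V x' \<longleftrightarrow> (\<forall>v\<in>V. x v mod k = x' v mod k)"
  unfolding mod_rep_def fun_eq_iff by auto

lemma mod_rep_in_PiE: "0 < k \<Longrightarrow> mod_rep k V x \<in> V \<rightarrow>\<^sub>E {..<k}"
  by (simp add: mod_rep_def)

lemma mod_rep_idem: "x \<in> V \<rightarrow>\<^sub>E {..<k} \<Longrightarrow> mod_rep k V x = x"
  by (auto simp: mod_rep_def PiE_def extensional_def Pi_iff)

lemma surj_mod_iff_inj_mod:
  assumes "finite V" "0 < k"
    and compat: "\<And>x x'. \<forall>v\<in>V. x v mod k = x' v mod k \<Longrightarrow> \<forall>w\<in>V. F x w mod k = F x' w mod k"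
  shows "surj_mod k V F \<longleftrightarrow> inj_mod k V F"
proof -
  define L where "L = V \<rightarrow>\<^sub>E {..<k}"
  define G where "G x = mod_rep k V (F x)" for x
  have rep_in_L: "mod_rep k V x \<in> L" for x
    unfolding L_def using assms(2) by (rule mod_rep_in_PiE)
  have rep_id: "x \<in> L \<Longrightarrow> mod_rep k V x = x" for x
    unfolding L_def by (rule mod_rep_idem)
  have G_rep: "G (mod_rep k V x) = G x" for x
    unfolding G_def mod_rep_eq_iff by (rule compat) (simp add: mod_rep_def)
  have "finite L" "G ` L \<subseteq> L"
    using assms(1) rep_in_L by (auto simp: L_def G_def finite_PiE)
  have "surj_mod k V F \<longleftrightarrow> (\<forall>y. \<exists>x. G x = mod_rep k V y)"
    unfolding surj_mod_def G_def mod_rep_eq_iff ..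
  also have "\<dots> \<longleftrightarrow> L \<subseteq> G ` L"
  proof
    assume surj: "\<forall>y. \<exists>x. G x = mod_rep k V y"
    show "L \<subseteq> G ` L"
    proof
      fix y
      assume "y \<in> L"
      obtain x where "G x = mod_rep k V y"
        using surj by blast
      with \<open>y \<in> L\<close> have "y = G (mod_rep k V x)"
        by (simp add: G_rep rep_id)
      then show "y \<in> G ` L"
        using rep_in_L by blast
    qed
  next
    assume "L \<subseteq> G ` L"
    then show "\<forall>y. \<exists>x. G x = mod_rep k V y"
      using rep_in_L by (metis imageE subsetD)
  qed
  also have "\<dots> \<longleftrightarrow> inj_on G L"
  proof
    assume "L \<subseteq> G ` L"
    with \<open>finite L\<close> show "inj_on G L"
      by (rule finite_surj_inj)
  next
    assume "inj_on G L"
    with \<open>finite L\<close> \<open>G ` L \<subseteq> L\<close> show "L \<subseteq> G ` L"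
      using endo_inj_surj by blast
  qed
  also have "\<dots> \<longleftrightarrow> (\<forall>x x'. G x = G x' \<longrightarrow> mod_rep k V x = mod_rep k V x')"
    unfolding inj_on_def using rep_in_L rep_id G_rep by metis
  also have "\<dots> \<longleftrightarrow> inj_mod k V F"
    unfolding inj_mod_def G_def mod_rep_eq_iff ..
  finally show ?thesis .
qed

lemma toggle_sum_mod_compat:
  assumes "\<forall>v\<in>V. x v mod k = x' v mod k"
  shows "toggle_sum A V x w mod k = toggle_sum A V x' w mod k"
proof -
  let ?t = "\<lambda>x v. (if w = v \<or> (v, w) \<in> A then x v else 0) mod k"
  have sums: "(\<Sum>v\<in>V. ?t x v) = (\<Sum>v\<in>V. ?t x' v)"
    using assms by (intro sum.cong) auto
  have "toggle_sum A V x w mod k = (\<Sum>v\<in>V. ?t x v) mod k"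
    unfolding toggle_sum_def by (simp only: mod_sum_eq)
  also have "\<dots> = (\<Sum>v\<in>V. ?t x' v) mod k"
    unfolding sums ..
  also have "\<dots> = toggle_sum A V x' w mod k"
    unfolding toggle_sum_def by (simp only: mod_sum_eq)
  finally show ?thesis .
qed

lemma add_mod_eq_zero_unique:
  fixes a b c k :: nat
  assumes "(a + b) mod k = 0" "(a + c) mod k = 0"
  shows "b mod k = c mod k"
proof -
  have "b mod k = (b + (a + c)) mod k"
    using assms(2) by (metis add_0_right mod_add_right_eq)
  also have "\<dots> = (c + (a + b)) mod k"
    by (simp add: ac_simps)
  also have "\<dots> = c mod k"
    using assms(1) by (metis add_0_right mod_add_right_eq)
  finally show ?thesis .
qed

lemma add_complement_mod_eq_zero:
  fixes a k :: nat
  assumes "0 < k"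
  shows "(a + (k - a mod k)) mod k = 0"
proof -
  have "(a + (k - a mod k)) mod k = (a mod k + (k - a mod k)) mod k"
    by (simp add: mod_add_left_eq)
  also have "\<dots> = 0"
    using assms by (simp add: le_add_diff_inverse less_imp_le)
  finally show ?thesis .
qed

lemma always_winnable_iff_surj_mod:
  assumes "finite V" "0 < k"
  shows "always_winnable k V A \<longleftrightarrow> surj_mod k V (toggle_sum A V)"
proof
  assume aw: "always_winnable k V A"
  show "surj_mod k V (toggle_sum A V)"
    unfolding surj_mod_def
  proof
    fix y :: "'a \<Rightarrow> nat"
    define lab where "lab w = (k - y w mod k) mod k" for w
    have "\<forall>w\<in>V. lab w < k"
      using assms(2) by (simp add: lab_def)
    with aw obtain x where x: "\<forall>w\<in>V. (lab w + toggle_sum A V x w) mod k = 0"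
      using winnable_iff_toggle_sum[OF assms] unfolding always_winnable_def by blast
    have lab_y: "(lab w + y w) mod k = 0" for w
      using add_complement_mod_eq_zero[OF assms(2), of "y w"]
      unfolding lab_def by (metis add.commute mod_add_right_eq)
    show "\<exists>x. \<forall>w\<in>V. toggle_sum A V x w mod k = y w mod k"
    proof (intro exI ballI)
      fix w
      assume "w \<in> V"
      with x lab_y show "toggle_sum A V x w mod k = y w mod k"
        by (metis add_mod_eq_zero_unique)
    qed
  qed
next
  assume surj: "surj_mod k V (toggle_sum A V)"
  show "always_winnable k V A"
    unfolding always_winnable_def
  proof (intro allI impI)
    fix lab :: "'a \<Rightarrow> nat"
    assume lab: "\<forall>v\<in>V. lab v < k"
    obtain x where x: "\<forall>w\<in>V. toggle_sum A V x w mod k = (k - lab w) mod k"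
      using surj[unfolded surj_mod_def, rule_format, of "\<lambda>w. k - lab w"] by blast
    have "(lab w + toggle_sum A V x w) mod k = 0" if "w \<in> V" for w
    proof -
      have "(lab w + toggle_sum A V x w) mod k = (lab w + (k - lab w)) mod k"
        using x that by (metis mod_add_right_eq)
      also have "\<dots> = 0"
        using lab that by (simp add: less_imp_le)
      finally show ?thesis .
    qed
    then show "winnable k V A lab"
      using winnable_iff_toggle_sum[OF assms lab] by blast
  qed
qed

section \<open>Vertex sets without entering arcs\<close>

lemma toggle_sum_split:
  assumes "finite V" "S \<subseteq> V"
  shows "toggle_sum A V x w = toggle_sum A S x w + toggle_sum A (V - S) x w"
  unfolding toggle_sum_def using sum.subset_diff[OF assms(2,1)] by (simp add: add.commute)

lemma toggle_sum_eq_zero: "\<forall>v\<in>U. x v = 0 \<Longrightarrow> toggle_sum A U x w = 0"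
  unfolding toggle_sum_def by (rule sum.neutral) simp

context
  fixes V S :: "'a set" and A :: "('a \<times> 'a) set"
  assumes finite: "finite V" and subset: "S \<subseteq> V"
    and no_arc_into: "\<forall>r\<in>V - S. \<forall>s\<in>S. (r, s) \<notin> A"
begin

lemma toggle_sum_in_closed:
  assumes "w \<in> S"
  shows "toggle_sum A V x w = toggle_sum A S x w"
proof -
  have "toggle_sum A (V - S) x w = 0"
    unfolding toggle_sum_def using assms no_arc_into by (intro sum.neutral) auto
  then show ?thesis
    using toggle_sum_split[OF finite subset] by simp
qed

lemma surj_mod_in_closed:
  assumes "surj_mod k V (toggle_sum A V)"
  shows "surj_mod k S (toggle_sum A S)"
  unfolding surj_mod_def
proof
  fix y :: "'a \<Rightarrow> nat"
  obtain x where x: "\<forall>w\<in>V. toggle_sum A V x w mod k = y w mod k"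
    using assms unfolding surj_mod_def by blast
  have "toggle_sum A S x w mod k = y w mod k" if "w \<in> S" for w
  proof -
    have "w \<in> V"
      using subset that by blast
    with x have "toggle_sum A V x w mod k = y w mod k"
      by blast
    then show ?thesis
      using toggle_sum_in_closed[OF that] by simp
  qed
  then show "\<exists>x. \<forall>w\<in>S. toggle_sum A S x w mod k = y w mod k"
    by blast
qed

lemma inj_mod_complement:
  assumes inj: "inj_mod k V (toggle_sum A V)"
  shows "inj_mod k (V - S) (toggle_sum A (V - S))"
  unfolding inj_mod_def
proof (intro allI impI)
  fix x x'
  assume eq: "\<forall>w\<in>V - S. toggle_sum A (V - S) x w mod k = toggle_sum A (V - S) x' w mod k"
  define z where "z v = (if v \<in> S then 0 else x v)" for v
  define z' where "z' v = (if v \<in> S then 0 else x' v)" for v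
  have z: "toggle_sum A V z w = toggle_sum A (V - S) x w"
    "toggle_sum A V z' w = toggle_sum A (V - S) x' w" for w
    using toggle_sum_split[OF finite subset] toggle_sum_eq_zero[of S]
      toggle_sum_cong[of "V - S" z x] toggle_sum_cong[of "V - S" z' x']
    unfolding z_def z'_def by simp_all
  have zero: "toggle_sum A (V - S) x w = 0" "toggle_sum A (V - S) x' w = 0" if "w \<in> S" for w
    unfolding toggle_sum_def using that no_arc_into by (auto intro: sum.neutral)
  have "toggle_sum A V z w mod k = toggle_sum A V z' w mod k" if "w \<in> V" for w
  proof (cases "w \<in> S")
    case True
    then show ?thesis
      unfolding z using zero by simp
  next
    case False
    then show ?thesis
      unfolding z using eq that by simp
  qed
  with inj have "\<forall>v\<in>V. z v mod k = z' v mod k"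
    unfolding inj_mod_def by blast
  then show "\<forall>v\<in>V - S. x v mod k = x' v mod k"
    unfolding z_def z'_def by auto
qed

lemma surj_mod_combine:
  assumes k: "0 < k"
    and surj_S: "surj_mod k S (toggle_sum A S)"
    and surj_R: "surj_mod k (V - S) (toggle_sum A (V - S))"
  shows "surj_mod k V (toggle_sum A V)"
  unfolding surj_mod_def
proof
  fix y :: "'a \<Rightarrow> nat"
  obtain xS where xS: "\<forall>w\<in>S. toggle_sum A S xS w mod k = y w mod k"
    using surj_S unfolding surj_mod_def by blast
  \<comment> \<open>on \<open>V - S\<close>, compensate for the contribution of the toggles on \<open>S\<close>\<close>
  define c where "c w = k - toggle_sum A S xS w mod k" for w
  obtain xR where xR: "\<forall>w\<in>V - S. toggle_sum A (V - S) xR w mod k = (y w + c w) mod k"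
    using surj_R[unfolded surj_mod_def, rule_format, of "\<lambda>w. y w + c w"] by blast
  define x where "x v = (if v \<in> S then xS v else xR v)" for v
  have on_S: "toggle_sum A S x w = toggle_sum A S xS w" for w
    unfolding x_def by (rule toggle_sum_cong) simp
  have on_R: "toggle_sum A (V - S) x w = toggle_sum A (V - S) xR w" for w
    unfolding x_def by (rule toggle_sum_cong) simp
  have "toggle_sum A V x w mod k = y w mod k" if "w \<in> V" for w
  proof (cases "w \<in> S")
    case True
    then show ?thesis
      using xS on_S toggle_sum_in_closed by simp
  next
    case False
    let ?a = "toggle_sum A S xS w"
    have "toggle_sum A V x w mod k = (?a + toggle_sum A (V - S) xR w) mod k"
      using toggle_sum_split[OF finite subset] on_S on_R by simp
    also have "\<dots> = (?a + (y w + c w)) mod k"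
    proof -
      have "toggle_sum A (V - S) xR w mod k = (y w + c w) mod k"
        using xR that False by blast
      then show ?thesis
        by (metis mod_add_right_eq)
    qed
    also have "\<dots> = ((?a + c w) + y w) mod k"
      by (simp add: ac_simps)
    also have "\<dots> = y w mod k"
      using add_complement_mod_eq_zero[OF k, of ?a] mod_add_left_eq[of "?a + c w" k "y w"]
      unfolding c_def by simp
    finally show ?thesis .
  qed
  then show "\<exists>x. \<forall>w\<in>V. toggle_sum A V x w mod k = y w mod k"
    by blast
qed

lemma always_winnable_split:
  assumes k: "0 < k"
  shows "always_winnable k V A \<longleftrightarrow> always_winnable k S A \<and> always_winnable k (V - S) A"
proof -
  have fin: "finite S" "finite (V - S)"
    using finite subset finite_subset by auto
  have surj_iff_inj: "surj_mod k U (toggle_sum A U) \<longleftrightarrow> inj_mod k U (toggle_sum A U)"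
    if "finite U" for U
    by (rule surj_mod_iff_inj_mod[OF that k]) (simp add: toggle_sum_mod_compat)
  have "surj_mod k V (toggle_sum A V) \<longleftrightarrow>
      surj_mod k S (toggle_sum A S) \<and> surj_mod k (V - S) (toggle_sum A (V - S))"
  proof
    assume surj_V: "surj_mod k V (toggle_sum A V)"
    then have "inj_mod k V (toggle_sum A V)"
      using surj_iff_inj[OF finite] by simp
    then have "inj_mod k (V - S) (toggle_sum A (V - S))"
      by (rule inj_mod_complement)
    with surj_V show "surj_mod k S (toggle_sum A S) \<and> surj_mod k (V - S) (toggle_sum A (V - S))"
      using surj_mod_in_closed surj_iff_inj[OF fin(2)] by simp
  next
    assume "surj_mod k S (toggle_sum A S) \<and> surj_mod k (V - S) (toggle_sum A (V - S))"
    then show "surj_mod k V (toggle_sum A V)"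
      using surj_mod_combine[OF k] by blast
  qed
  then show ?thesis
    using always_winnable_iff_surj_mod[OF finite k] always_winnable_iff_surj_mod[OF fin(1) k]
      always_winnable_iff_surj_mod[OF fin(2) k] by simp
qed

end

section \<open>Strong components\<close>

definition scc :: "('a \<times> 'a) set \<Rightarrow> 'a set \<Rightarrow> 'a \<Rightarrow> 'a set" where
  "scc A V u = {w \<in> V. (u, w) \<in> (A \<inter> V \<times> V)\<^sup>* \<and> (w, u) \<in> (A \<inter> V \<times> V)\<^sup>*}"

lemma scc_subset: "scc A V u \<subseteq> V"
  unfolding scc_def by blast

lemma self_in_scc: "u \<in> V \<Longrightarrow> u \<in> scc A V u"
  unfolding scc_def by blast

lemma scc_sym: "w \<in> scc A V u \<Longrightarrow> u \<in> scc A V w"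
  unfolding scc_def by (auto elim: rtranclE)

lemma scc_eq: "w \<in> scc A V u \<Longrightarrow> scc A V w = scc A V u"
  unfolding scc_def by (blast intro: rtrancl_trans)

lemma rtrancl_within_scc:
  assumes "w \<in> scc A V u"
  shows "(u, w) \<in> (A \<inter> scc A V u \<times> scc A V u)\<^sup>*"
proof -
  let ?R = "A \<inter> V \<times> V" and ?C = "scc A V u"
  have "(u, w) \<in> ?R\<^sup>*" "(w, u) \<in> ?R\<^sup>*"
    using assms unfolding scc_def by blast+
  then show ?thesis
  proof (induction rule: rtrancl_induct)
    case (step y z)
    have "(y, u) \<in> ?R\<^sup>*"
      using step.hyps(2) step.prems by (rule converse_rtrancl_into_rtrancl)
    then have "(u, y) \<in> (A \<inter> ?C \<times> ?C)\<^sup>*" and "y \<in> ?C" "z \<in> ?C"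
      using step unfolding scc_def by (blast intro: rtrancl_into_rtrancl)+
    with step.hyps(2) show ?case
      by (blast intro: rtrancl_into_rtrancl)
  qed simp
qed

lemma strongly_connected_scc: "strongly_connected (scc A V u) (A \<inter> scc A V u \<times> scc A V u)"
  unfolding strongly_connected_def Int_assoc Int_absorb
  by (metis rtrancl_within_scc scc_eq)

lemma strongly_connected_subset_scc:
  assumes "strongly_connected C (A \<inter> C \<times> C)" "C \<subseteq> V" "u \<in> C"
  shows "C \<subseteq> scc A V u"
proof -
  have "(A \<inter> C \<times> C \<inter> C \<times> C)\<^sup>* \<subseteq> (A \<inter> V \<times> V)\<^sup>*"
    using assms(2) by (intro rtrancl_mono) blast
  with assms show ?thesis
    unfolding strongly_connected_def scc_def by blast
qed

lemma strong_component_iff_scc: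
  "strong_component V A C \<longleftrightarrow> (V = {} \<and> C = {}) \<or> (\<exists>u\<in>V. C = scc A V u)"
proof
  assume "strong_component V A C"
  then have C: "C \<subseteq> V" "strongly_connected C (A \<inter> C \<times> C)"
    and maximal: "\<And>C'. C \<subseteq> C' \<Longrightarrow> C' \<subseteq> V \<Longrightarrow> strongly_connected C' (A \<inter> C' \<times> C') \<Longrightarrow> C' = C"
    unfolding strong_component_def by simp_all
  show "(V = {} \<and> C = {}) \<or> (\<exists>u\<in>V. C = scc A V u)"
  proof (cases "C = {}")
    case True
    have "V = {}"
    proof (rule ccontr)
      assume "V \<noteq> {}"
      then obtain v where "v \<in> V" by blast
      have "strongly_connected {v} (A \<inter> {v} \<times> {v})"
        unfolding strongly_connected_def by simp
      with \<open>v \<in> V\<close> True have "{v} = C"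
        by (intro maximal) simp_all
      with True show False by simp
    qed
    with True show ?thesis by simp
  next
    case False
    then obtain u where "u \<in> C" by blast
    then have "C \<subseteq> scc A V u"
      by (rule strongly_connected_subset_scc[OF C(2,1)])
    then have "scc A V u = C"
      by (rule maximal[OF _ scc_subset strongly_connected_scc])
    with \<open>u \<in> C\<close> C(1) have "\<exists>u\<in>V. C = scc A V u"
      by auto
    then show ?thesis ..
  qed
next
  assume "(V = {} \<and> C = {}) \<or> (\<exists>u\<in>V. C = scc A V u)"
  then show "strong_component V A C"
  proof
    assume "V = {} \<and> C = {}"
    then show ?thesis
      unfolding strong_component_def strongly_connected_def by simp
  next
    assume "\<exists>u\<in>V. C = scc A V u"
    then obtain u where u: "u \<in> V" and C: "C = scc A V u" by blast
    have maximal: "C' = scc A V u"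
      if "scc A V u \<subseteq> C'" "C' \<subseteq> V" "strongly_connected C' (A \<inter> C' \<times> C')" for C'
    proof -
      have "u \<in> C'"
        using self_in_scc[OF u] that(1) by auto
      then have "C' \<subseteq> scc A V u"
        by (rule strongly_connected_subset_scc[OF that(3,2)])
      with that(1) show ?thesis by auto
    qed
    show ?thesis
      unfolding strong_component_def C
    proof (intro conjI allI impI)
      fix C'
      assume "scc A V u \<subseteq> C' \<and> C' \<subseteq> V \<and> strongly_connected C' (A \<inter> C' \<times> C')"
      then show "C' = scc A V u"
        using maximal by auto
    qed (rule scc_subset, rule strongly_connected_scc)
  qed
qed

lemma scc_eq_of_subset:
  assumes "scc A V u \<subseteq> T" "T \<subseteq> V"
  shows "scc A T u = scc A V u"
proof
  have "(A \<inter> T \<times> T)\<^sup>* \<subseteq> (A \<inter> V \<times> V)\<^sup>*"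
    using assms(2) by (intro rtrancl_mono) blast
  then show "scc A T u \<subseteq> scc A V u"
    using assms(2) unfolding scc_def by blast
next
  show "scc A V u \<subseteq> scc A T u"
  proof
    fix w
    assume w: "w \<in> scc A V u"
    have mono: "(A \<inter> scc A V u \<times> scc A V u)\<^sup>* \<subseteq> (A \<inter> T \<times> T)\<^sup>*"
      using assms(1) by (intro rtrancl_mono) blast
    have "(u, w) \<in> (A \<inter> scc A V u \<times> scc A V u)\<^sup>*"
      using w by (rule rtrancl_within_scc)
    moreover have "(w, u) \<in> (A \<inter> scc A V u \<times> scc A V u)\<^sup>*"
      using rtrancl_within_scc[OF scc_sym[OF w]] unfolding scc_eq[OF w] .
    ultimately show "w \<in> scc A T u"
      using w mono assms(1) unfolding scc_def by blast
  qed
qed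

definition ancestors :: "('a \<times> 'a) set \<Rightarrow> 'a set \<Rightarrow> 'a \<Rightarrow> 'a set" where
  "ancestors A V v = {u \<in> V. (u, v) \<in> (A \<inter> V \<times> V)\<^sup>*}"

lemma no_arc_into_ancestors: "\<forall>r\<in>V - ancestors A V v. \<forall>s\<in>ancestors A V v. (r, s) \<notin> A"
  unfolding ancestors_def by (blast intro: converse_rtrancl_into_rtrancl)

lemma scc_within_ancestors:
  assumes "u \<in> ancestors A V v"
  shows "scc A (ancestors A V v) u = scc A V u"
proof (rule scc_eq_of_subset)
  show "scc A V u \<subseteq> ancestors A V v"
    using assms unfolding ancestors_def scc_def by (blast intro: rtrancl_trans)
  show "ancestors A V v \<subseteq> V"
    unfolding ancestors_def by blast
qed

lemma scc_within_non_ancestors: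
  assumes "u \<in> V - ancestors A V v"
  shows "scc A (V - ancestors A V v) u = scc A V u"
proof (rule scc_eq_of_subset[OF _ Diff_subset])
  show "scc A V u \<subseteq> V - ancestors A V v"
    using assms unfolding ancestors_def scc_def by (blast intro: rtrancl_trans)
qed

lemma exists_proper_ancestors:
  assumes "u \<in> V" "scc A V u \<noteq> V"
  obtains v where "v \<in> V" "ancestors A V v \<noteq> V"
proof -
  obtain w where "w \<in> V" "w \<notin> scc A V u"
    using assms(2) scc_subset[of A V u] by (metis subsetI subset_antisym)
  then consider "(w, u) \<notin> (A \<inter> V \<times> V)\<^sup>*" | "(u, w) \<notin> (A \<inter> V \<times> V)\<^sup>*"
    unfolding scc_def by auto
  then show ?thesis
  proof cases
    case 1
    then have "w \<notin> ancestors A V u"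
      unfolding ancestors_def by simp
    with \<open>w \<in> V\<close> have "ancestors A V u \<noteq> V"
      by auto
    with assms(1) show ?thesis
      by (rule that)
  next
    case 2
    then have "u \<notin> ancestors A V w"
      unfolding ancestors_def by simp
    with assms(1) have "ancestors A V w \<noteq> V"
      by auto
    with \<open>w \<in> V\<close> show ?thesis
      by (rule that)
  qed
qed

section \<open>Reduction to strong components\<close>

lemma always_winnable_empty: "always_winnable k {} A"
  unfolding always_winnable_def winnable_def by auto

lemma always_winnable_restrict:
  assumes "finite C" "0 < k"
  shows "always_winnable k C (A \<inter> C \<times> C) \<longleftrightarrow> always_winnable k C A"
proof -
  have "toggle_sum (A \<inter> C \<times> C) C x w = toggle_sum A C x w" if "w \<in> C" for x w
    unfolding toggle_sum_def using that by (intro sum.cong) auto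
  then have "surj_mod k C (toggle_sum (A \<inter> C \<times> C) C) \<longleftrightarrow> surj_mod k C (toggle_sum A C)"
    unfolding surj_mod_def by simp
  then show ?thesis
    unfolding always_winnable_iff_surj_mod[OF assms] .
qed

lemma always_winnable_iff_sccs:
  assumes "finite V" "0 < k"
  shows "always_winnable k V A \<longleftrightarrow> (\<forall>u\<in>V. always_winnable k (scc A V u) A)"
  using assms(1)
proof (induction V rule: finite_psubset_induct)
  case (psubset V)
  show ?case
  proof (cases "\<forall>u\<in>V. scc A V u = V")
    case True
    then show ?thesis
      by (cases "V = {}") (auto simp: always_winnable_empty)
  next
    case False
    then obtain u where "u \<in> V" "scc A V u \<noteq> V"
      by blast
    then obtain v where "v \<in> V" and proper: "ancestors A V v \<noteq> V"
      by (rule exists_proper_ancestors)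
    define S where "S = ancestors A V v"
    have "S \<subseteq> V" "v \<in> S"
      using \<open>v \<in> V\<close> unfolding S_def ancestors_def by auto
    have "S \<subset> V"
      using \<open>S \<subseteq> V\<close> proper unfolding S_def by (rule psubsetI)
    have "V - S \<subset> V"
      using \<open>v \<in> V\<close> \<open>v \<in> S\<close> by (intro psubsetI) auto
    have "always_winnable k V A \<longleftrightarrow> always_winnable k S A \<and> always_winnable k (V - S) A"
      using psubset.hyps \<open>S \<subseteq> V\<close> no_arc_into_ancestors assms(2)
      unfolding S_def by (rule always_winnable_split)
    also have "\<dots> \<longleftrightarrow> (\<forall>u\<in>S. always_winnable k (scc A S u) A)
        \<and> (\<forall>u\<in>V - S. always_winnable k (scc A (V - S) u) A)"
      unfolding psubset.IH[OF \<open>S \<subset> V\<close>] psubset.IH[OF \<open>V - S \<subset> V\<close>] ..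
    also have "\<dots> \<longleftrightarrow> (\<forall>u\<in>S. always_winnable k (scc A V u) A)
        \<and> (\<forall>u\<in>V - S. always_winnable k (scc A V u) A)"
      unfolding S_def by (simp add: scc_within_ancestors scc_within_non_ancestors)
    also have "\<dots> \<longleftrightarrow> (\<forall>u\<in>V. always_winnable k (scc A V u) A)"
      using \<open>S \<subseteq> V\<close> by blast
    finally show ?thesis .
  qed
qed

theorem mainTheorem3:
  fixes V :: "'a set" and A :: "('a \<times> 'a) set" and k :: nat
  assumes "finite V" and "digraph V A" and "k \<ge> 2"
  shows "always_winnable k V A \<longleftrightarrow>
         (\<forall>C. strong_component V A C \<longrightarrow> always_winnable k C (A \<inter> (C \<times> C)))"
proof -
  have k: "0 < k"
    using assms(3) by simp
  have restrict: "always_winnable k C (A \<inter> C \<times> C) \<longleftrightarrow> always_winnable k C A"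
    if "strong_component V A C" for C
  proof -
    have "finite C"
      using that assms(1) finite_subset unfolding strong_component_def by blast
    then show ?thesis
      using k by (rule always_winnable_restrict)
  qed
  have "always_winnable k V A \<longleftrightarrow> (\<forall>u\<in>V. always_winnable k (scc A V u) A)"
    using assms(1) k by (rule always_winnable_iff_sccs)
  also have "\<dots> \<longleftrightarrow> (\<forall>C. strong_component V A C \<longrightarrow> always_winnable k C A)"
    unfolding strong_component_iff_scc by (auto simp: always_winnable_empty)
  finally show ?thesis
    by (simp add: restrict)
qed

end
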